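(* Let $(\mathcal{P},\cdot)$ be an admissible Poisson algebra such that the center of the Lie algebra $\mathfrak{g}_{\mathcal{P}}=(\mathcal{P},\{\,,\,\})$ is zero. Then $\mathcal{P}$ has no non-zero idempotent. If moreover $\mathcal{P}$ is finite-dimensional, then $\mathcal{P}$ is a nilalgebra.
   Context: $\mathbb{K}$ is a field of characteristic different from $2$ and $3$. Associator: $A(X,Y,Z)=(X\cdot Y)\cdot Z-X\cdot(Y\cdot Z)$. An admissible Poisson algebra is a $\mathbb{K}$-vector space $\mathcal{P}$ with a bilinear product $\cdot$ satisfying $3A(X,Y,Z)=(X\cdot Z)\cdot Y+(Y\cdot Z)\cdot X-(Y\cdot X)\cdot Z-(Z\cdot X)\cdot Y$ for all $X,Y,Z$. Its bracket is $\{X,Y\}=\frac12(X\cdot Y-Y\cdot X)$ (a Lie bracket), and $\mathfrak{g}_{\mathcal{P}}$ denotes $(\mathcal{P},\{\,,\,\})$. Powers: $X^1=X$, $X^{i+1}=X\cdot X^i$; $\mathcal{P}$ is a nilalgebra if for every $X$ there is $r$ with $X^r=0$. *)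

theory Defs
  imports Complex_Main
begin

definition bilinear_product :: "('k::field \<Rightarrow> 'v::ab_group_add \<Rightarrow> 'v) \<Rightarrow> ('v \<Rightarrow> 'v \<Rightarrow> 'v) \<Rightarrow> bool" where
  "bilinear_product scale mult \<longleftrightarrow>
     (\<forall>x y z. mult (x + y) z = mult x z + mult y z) \<and>
     (\<forall>x y z. mult x (y + z) = mult x y + mult x z) \<and>
     (\<forall>c x y. mult (scale c x) y = scale c (mult x y)) \<and>
     (\<forall>c x y. mult x (scale c y) = scale c (mult x y))"

definition assoc :: "('v \<Rightarrow> 'v \<Rightarrow> 'v) \<Rightarrow> 'v \<Rightarrow> 'v \<Rightarrow> 'v \<Rightarrow> 'v::ab_group_add" where
  "assoc mult x y z = mult (mult x y) z - mult x (mult y z)"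

definition admissible_poisson :: "('k::field \<Rightarrow> 'v::ab_group_add \<Rightarrow> 'v) \<Rightarrow> ('v \<Rightarrow> 'v \<Rightarrow> 'v) \<Rightarrow> bool" where
  "admissible_poisson scale mult \<longleftrightarrow>
     vector_space scale \<and> bilinear_product scale mult \<and>
     (\<forall>x y z. scale 3 (assoc mult x y z)
        = mult (mult x z) y + mult (mult y z) x - mult (mult y x) z - mult (mult z x) y)"

definition pbracket :: "('k::field \<Rightarrow> 'v::ab_group_add \<Rightarrow> 'v) \<Rightarrow> ('v \<Rightarrow> 'v \<Rightarrow> 'v) \<Rightarrow> 'v \<Rightarrow> 'v \<Rightarrow> 'v" where
  "pbracket scale mult x y = scale (1/2) (mult x y - mult y x)"

definition lie_center :: "('k::field \<Rightarrow> 'v::ab_group_add \<Rightarrow> 'v) \<Rightarrow> ('v \<Rightarrow> 'v \<Rightarrow> 'v) \<Rightarrow> 'v set" where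
  "lie_center scale mult = {z. \<forall>x. pbracket scale mult z x = 0}"

text \<open>Powers: ppow mult X n is X^n for n >= 1 (X^1 = X, X^(i+1) = X * X^i); the value at 0 is a dummy.\<close>
fun ppow :: "('v \<Rightarrow> 'v \<Rightarrow> 'v) \<Rightarrow> 'v \<Rightarrow> nat \<Rightarrow> 'v" where
  "ppow mult x 0 = x"
| "ppow mult x (Suc 0) = x"
| "ppow mult x (Suc (Suc n)) = mult x (ppow mult x (Suc n))"

definition nilalgebra :: "('v::zero \<Rightarrow> 'v \<Rightarrow> 'v) \<Rightarrow> bool" where
  "nilalgebra mult \<longleftrightarrow> (\<forall>x. \<exists>r\<ge>1. ppow mult x r = 0)"

definition finite_dim :: "('k::field \<Rightarrow> 'v::ab_group_add \<Rightarrow> 'v) \<Rightarrow> bool" where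
  "finite_dim scale \<longleftrightarrow> (\<exists>B. finite B \<and> module.span scale B = UNIV)"

end

theory Submission
  imports Defs
begin

(* The symmetrised product X o Y = (XY + YX)/2 of an admissible Poisson algebra is commutative
   and associative, and {X, -} is a derivation of it: once 3 is invertible, both identities are
   linear consequences of the admissibility identity.  Since XY = X o Y + {X, Y}, an idempotent e
   satisfies e o e = e, and a = {X, e} = {X, e o e} = 2 e o a gives e o a = 2 (e o e) o a = 2 e o a;
   so a = 0, e is central and therefore zero.  The powers of X for the two products agree because
   {X, -} kills X^n.  In finite dimension the descending chain X^(i+1) o P stabilises (Fitting),
   which yields X^N = X^(2N) o a; then X^N o a is a o-idempotent, hence zero, and
   X^N = X^N o (X^N o a) = 0. *)

lemma ppow_Suc: "0 < n \<Longrightarrow> ppow f x (Suc n) = f x (ppow f x n)"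
  by (cases n) auto

context vector_space
begin

lemma scale_two: "scale 2 x = x + x"
  using scale_left_distrib[of 1 1 x] by simp

lemma scale_three: "scale 3 x = x + x + x"
  using scale_left_distrib[of 2 1 x] by (simp add: scale_two)

lemma finite_dim_imp_finite_dimensional:
  assumes "finite_dim scale"
  obtains B where "finite_dimensional_vector_space scale B"
proof -
  obtain S where S: "finite S" "span S = UNIV"
    using assms unfolding finite_dim_def by blast
  obtain B where B: "B \<subseteq> S" "independent B" "S \<subseteq> span B"
    using maximal_independent_subset[of S] by blast
  have "span B = UNIV"
    using S(2) B(3) span_mono span_span by blast
  then have "finite_dimensional_vector_space scale B"
    using S(1) B(1,2) finite_subset by unfold_locales blast+
  then show thesis
    by (rule that)
qed

lemma decseq_subspaces_stabilize:
  assumes "finite_dim scale" and "\<And>i. subspace (V i)" and "decseq V"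
  obtains M where "\<And>j. M \<le> j \<Longrightarrow> V j = V M"
proof -
  obtain B where "finite_dimensional_vector_space scale B"
    using assms(1) finite_dim_imp_finite_dimensional by blast
  then interpret finite_dimensional_vector_space scale B .
  obtain M where M: "\<And>i. dim (V M) \<le> dim (V i)"
    using ex_has_least_nat[of "\<lambda>_. True" 0 "\<lambda>i. dim (V i)"] by blast
  have "V j = V M" if "M \<le> j" for j
    using subspace_dim_equal[OF assms(2) assms(2)] M \<open>decseq V\<close> that
    by (simp add: decseq_def)
  then show thesis by (rule that)
qed

end

locale bilinear_algebra = vector_space scale
  for scale :: "'k::field \<Rightarrow> 'v::ab_group_add \<Rightarrow> 'v" +
  fixes mult :: "'v \<Rightarrow> 'v \<Rightarrow> 'v"
  assumes bilinear: "bilinear_product scale mult"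
begin

lemma mult_add_left: "mult (x + y) z = mult x z + mult y z"
  and mult_add_right: "mult x (y + z) = mult x y + mult x z"
  and mult_scale_left: "mult (scale c x) y = scale c (mult x y)"
  and mult_scale_right: "mult x (scale c y) = scale c (mult x y)"
  using bilinear unfolding bilinear_product_def by blast+

lemma additive_mult_left: "additive (\<lambda>x. mult x y)"
  and additive_mult_right: "additive (mult x)"
  by unfold_locales (fact mult_add_left mult_add_right)+

lemma mult_zero_left [simp]: "mult 0 y = 0"
  and mult_zero_right [simp]: "mult x 0 = 0"
  and mult_diff_left: "mult (x - y) z = mult x z - mult y z"
  and mult_diff_right: "mult x (y - z) = mult x y - mult x z"
  using additive.zero[OF additive_mult_left] additive.zero[OF additive_mult_right]
    additive.diff[OF additive_mult_left] additive.diff[OF additive_mult_right]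
  by blast+

lemma subspace_range_mult: "subspace (range (mult x))"
proof (rule subspaceI)
  show "0 \<in> range (mult x)"
    by (metis mult_zero_right rangeI)
  show "u + v \<in> range (mult x)" if "u \<in> range (mult x)" "v \<in> range (mult x)" for u v
    using that by (auto simp flip: mult_add_right)
  show "scale c u \<in> range (mult x)" if "u \<in> range (mult x)" for c u
    using that by (auto simp flip: mult_scale_right)
qed

lemmas mult_distribs = mult_add_left mult_add_right mult_diff_left mult_diff_right

end

locale comm_assoc_algebra = bilinear_algebra +
  assumes mult_commute: "mult x y = mult y x"
    and mult_assoc: "mult (mult x y) z = mult x (mult y z)"
begin

lemma mult_left_commute: "mult x (mult y z) = mult y (mult x z)"
  by (metis mult_assoc mult_commute)

lemma ppow_add:
  "0 < m \<Longrightarrow> 0 < n \<Longrightarrow> mult (ppow mult x m) (ppow mult x n) = ppow mult x (m + n)"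
proof (induction m rule: nat_induct_non_zero)
  case 1
  then show ?case by (simp add: ppow_Suc)
next
  case (Suc m)
  then show ?case by (simp add: ppow_Suc mult_assoc)
qed

lemma ppow_eq_mult_double_ppow:
  assumes "finite_dim scale"
  obtains N a where "0 < N" and "ppow mult x N = mult (ppow mult x (2 * N)) a"
proof -
  define V where "V i = range (mult (ppow mult x (Suc i)))" for i
  have "subspace (V i)" for i
    unfolding V_def by (rule subspace_range_mult)
  moreover have "V (Suc i) \<subseteq> V i" for i
  proof
    fix u assume "u \<in> V (Suc i)"
    then obtain a where "u = mult (mult x (ppow mult x (Suc i))) a"
      unfolding V_def by (auto simp: ppow_Suc)
    then have "u = mult (ppow mult x (Suc i)) (mult x a)"
      by (simp add: mult_left_commute mult_assoc)
    then show "u \<in> V i"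
      unfolding V_def by blast
  qed
  then have "decseq V"
    by (rule decseq_SucI)
  ultimately obtain M where M: "\<And>j. M \<le> j \<Longrightarrow> V j = V M"
    using decseq_subspaces_stabilize assms by blast
  have "ppow mult x (M + 2) \<in> V M"
    unfolding V_def by (simp add: ppow_Suc mult_commute)
  also have "V M = V (2 * M + 3)"
    using M[of "2 * M + 3"] by simp
  finally obtain a where "ppow mult x (M + 2) = mult (ppow mult x (2 * (M + 2))) a"
    unfolding V_def by (auto simp: numeral_eq_Suc)
  then show thesis
    using that[of "M + 2"] by simp
qed

lemma nilalgebra_if_no_nonzero_idempotent:
  assumes "finite_dim scale" and idempotent_zero: "\<And>e. mult e e = e \<Longrightarrow> e = 0"
  shows "nilalgebra mult"
  unfolding nilalgebra_def
proof
  fix x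
  obtain N a where "0 < N" and xN: "ppow mult x N = mult (ppow mult x (2 * N)) a"
    using ppow_eq_mult_double_ppow assms(1) by blast
  let ?q = "ppow mult x N"
  have qq: "mult ?q ?q = ppow mult x (2 * N)"
    using ppow_add[OF \<open>0 < N\<close> \<open>0 < N\<close>] by (simp add: mult_2)
  define e where "e = mult ?q a"
  have "mult e e = mult (mult (mult ?q ?q) a) a"
    unfolding e_def by (metis mult_assoc mult_commute)
  also have "\<dots> = e"
    unfolding e_def qq xN[symmetric] ..
  finally have "e = 0"
    by (rule idempotent_zero)
  have "?q = mult ?q e"
    unfolding e_def by (metis xN qq mult_assoc)
  then have "?q = 0"
    using \<open>e = 0\<close> by simp
  then show "\<exists>r\<ge>1. ppow mult x r = 0"
    using \<open>0 < N\<close> by (auto intro: exI[of _ N])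
qed

end

locale admissible_poisson_algebra =
  fixes scale :: "'k::field \<Rightarrow> 'v::ab_group_add \<Rightarrow> 'v" and mult :: "'v \<Rightarrow> 'v \<Rightarrow> 'v"
  assumes admissible_poisson: "admissible_poisson scale mult"
    and two_neq_zero: "(2::'k) \<noteq> 0"
    and three_neq_zero: "(3::'k) \<noteq> 0"
begin

sublocale bilinear_algebra scale mult
  using admissible_poisson
  unfolding admissible_poisson_def bilinear_algebra_def bilinear_algebra_axioms_def by blast

definition admissibility_defect :: "'v \<Rightarrow> 'v \<Rightarrow> 'v \<Rightarrow> 'v"
  where "admissibility_defect x y z = scale 3 (assoc mult x y z)
    - (mult (mult x z) y + mult (mult y z) x - mult (mult y x) z - mult (mult z x) y)"

lemma admissibility_defect_eq_0 [simp]: "admissibility_defect x y z = 0"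
  using admissible_poisson unfolding admissible_poisson_def admissibility_defect_def by simp

definition anticommutator :: "'v \<Rightarrow> 'v \<Rightarrow> 'v"
  where "anticommutator x y = mult x y + mult y x"

definition commutator :: "'v \<Rightarrow> 'v \<Rightarrow> 'v"
  where "commutator x y = mult x y - mult y x"

(* The coefficients of the defects below solve a linear system in the twelve cubic monomials
   in x, y, z. *)

lemma anticommutator_assoc:
  "anticommutator (anticommutator x y) z = anticommutator x (anticommutator y z)"
proof -
  have "scale 3 (anticommutator (anticommutator x y) z - anticommutator x (anticommutator y z))
      = admissibility_defect x y z + admissibility_defect x z y
        - admissibility_defect z x y - admissibility_defect z y x"
    unfolding admissibility_defect_def
    by (simp add: anticommutator_def assoc_def mult_distribs scale_three algebra_simps)
  also have "\<dots> = 0"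
    by simp
  finally show ?thesis
    using three_neq_zero by simp
qed

lemma commutator_anticommutator_right:
  "commutator x (anticommutator y z)
    = anticommutator (commutator x y) z + anticommutator y (commutator x z)"
proof -
  have "scale 3 (commutator x (anticommutator y z)
        - (anticommutator (commutator x y) z + anticommutator y (commutator x z)))
      = admissibility_defect y x z + admissibility_defect z x y - admissibility_defect x y z
        - admissibility_defect x z y - admissibility_defect y z x - admissibility_defect z y x"
    unfolding admissibility_defect_def
    by (simp add: anticommutator_def commutator_def assoc_def mult_distribs scale_three
        algebra_simps)
  also have "\<dots> = 0"
    by simp
  finally show ?thesis
    using three_neq_zero by simp
qed

definition sym_mult :: "'v \<Rightarrow> 'v \<Rightarrow> 'v"
  where "sym_mult x y = scale (1/2) (anticommutator x y)"

lemma pbracket_eq_commutator: "pbracket scale mult x y = scale (1/2) (commutator x y)"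
  by (simp add: pbracket_def commutator_def)

lemma mult_eq_sym_mult_add_pbracket: "mult x y = sym_mult x y + pbracket scale mult x y"
proof -
  have "sym_mult x y + pbracket scale mult x y
      = scale (1/2) ((mult x y + mult y x) + (mult x y - mult y x))"
    by (simp only: sym_mult_def pbracket_def anticommutator_def scale_right_distrib)
  also have "\<dots> = scale (1/2) (scale 2 (mult x y))"
    by (simp add: scale_two)
  finally show ?thesis
    using two_neq_zero by simp
qed

lemma pbracket_self [simp]: "pbracket scale mult x x = 0"
  by (simp add: pbracket_def)

lemma pbracket_antisym: "pbracket scale mult x y = - pbracket scale mult y x"
  by (simp add: pbracket_def scale_right_diff_distrib)

lemma mult_self: "mult x x = sym_mult x x"
  using mult_eq_sym_mult_add_pbracket[of x x] by simp

sublocale sym: comm_assoc_algebra scale sym_mult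
proof
  show "bilinear_product scale sym_mult"
    unfolding bilinear_product_def sym_mult_def anticommutator_def
    by (simp add: mult_add_left mult_add_right mult_scale_left mult_scale_right
        scale_right_distrib scale_left_commute algebra_simps)
  show "sym_mult x y = sym_mult y x" for x y
    by (simp add: sym_mult_def anticommutator_def add.commute)
  show "sym_mult (sym_mult x y) z = sym_mult x (sym_mult y z)" for x y z
    using anticommutator_assoc[of x y z]
    by (simp add: sym_mult_def anticommutator_def mult_scale_left mult_scale_right
        flip: scale_right_distrib)
qed

lemma pbracket_sym_mult_right:
  "pbracket scale mult x (sym_mult y z)
    = sym_mult (pbracket scale mult x y) z + sym_mult y (pbracket scale mult x z)"
proof -
  have "commutator x (sym_mult y z) = scale (1/2) (commutator x (anticommutator y z))"
    by (simp add: sym_mult_def commutator_def mult_scale_left mult_scale_right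
        flip: scale_right_diff_distrib)
  moreover have "sym_mult (commutator x y) z = scale (1/2) (anticommutator (commutator x y) z)"
    and "sym_mult y (commutator x z) = scale (1/2) (anticommutator y (commutator x z))"
    by (simp_all add: sym_mult_def)
  ultimately show ?thesis
    by (simp add: pbracket_eq_commutator commutator_anticommutator_right
        sym.mult_scale_left sym.mult_scale_right scale_right_distrib)
qed

lemma pbracket_sym_ppow: "pbracket scale mult x (ppow sym_mult x n) = 0"
proof (induction n)
  case (Suc n)
  then show ?case
    by (cases "n = 0") (simp_all add: ppow_Suc pbracket_sym_mult_right)
qed simp

lemma ppow_eq_sym_ppow: "ppow mult x n = ppow sym_mult x n"
proof (induction n)
  case (Suc n)
  then show ?case
    using mult_eq_sym_mult_add_pbracket[of x "ppow sym_mult x n"] pbracket_sym_ppow[of x n]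
    by (cases "n = 0") (simp_all add: ppow_Suc)
qed simp

lemma idempotent_in_lie_center:
  assumes "mult e e = e"
  shows "e \<in> lie_center scale mult"
proof -
  have ee: "sym_mult e e = e"
    using assms by (simp add: mult_self)
  have "pbracket scale mult x e = 0" for x
  proof -
    define a where "a = pbracket scale mult x e"
    define b where "b = sym_mult e a"
    have "a = sym_mult a e + sym_mult e a"
      using pbracket_sym_mult_right[of x e e] unfolding a_def ee .
    then have "a = b + b"
      by (simp add: b_def sym.mult_commute[of a e])
    have "sym_mult e b = b"
      by (simp add: b_def ee flip: sym.mult_assoc)
    have "b = sym_mult e (b + b)"
      using \<open>a = b + b\<close> by (simp add: b_def)
    also have "\<dots> = b + b"
      by (simp add: sym.mult_add_right \<open>sym_mult e b = b\<close>)
    finally have "b = 0"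
      by simp
    then show ?thesis
      using \<open>a = b + b\<close> by (simp add: a_def)
  qed
  then have "pbracket scale mult e x = 0" for x
    using pbracket_antisym[of e x] by simp
  then show ?thesis
    unfolding lie_center_def by simp
qed

end

theorem mainTheorem5:
  fixes scale :: "'k::field \<Rightarrow> 'v::ab_group_add \<Rightarrow> 'v"
    and mult :: "'v \<Rightarrow> 'v \<Rightarrow> 'v"
  assumes char2: "(2::'k) \<noteq> 0" and char3: "(3::'k) \<noteq> 0"
    and adm: "admissible_poisson scale mult"
    and center: "lie_center scale mult = {0}"
  shows "(\<forall>e. mult e e = e \<longrightarrow> e = 0) \<and> (finite_dim scale \<longrightarrow> nilalgebra mult)"
proof -
  interpret P: admissible_poisson_algebra scale mult
    using adm char2 char3 by (rule admissible_poisson_algebra.intro)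
  have idempotent_zero: "e = 0" if "mult e e = e" for e
    using P.idempotent_in_lie_center[OF that] center by blast
  moreover have "nilalgebra mult" if "finite_dim scale"
  proof -
    have "nilalgebra P.sym_mult"
      using P.sym.nilalgebra_if_no_nonzero_idempotent[OF that] idempotent_zero P.mult_self
      by metis
    then show ?thesis
      by (simp add: nilalgebra_def P.ppow_eq_sym_ppow)
  qed
  ultimately show ?thesis
    by blast
qed

end
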